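(* Let $K$ be a sequence with continuous leading block distribution under $\mathcal F$-expansion, with associated function $f_K^*$. Then there is a uniform continuation $f$ of $F$ such that $f_\infty^{-1}=f_K^*$ and $\{f^{-1}(K_n)\}$ is equidistributed.
   Context: $F$: $F_1=1,F_2=2,F_{n+2}=F_{n+1}+F_n$; $\phi$ golden ratio, $\omega=\phi^{-1}$. Zeckendorf expansion $m=\sum_{k=1}^M\epsilon(k)F_{M-k+1}$ (unique, $\epsilon(k)\in\{0,1\}$, $\epsilon(1)=1$, $\epsilon(k)\epsilon(k+1)=0$); $\mathrm{LB}_s(m)=(\epsilon(1),\dots,\epsilon(s))$ if $M\ge s$. Blocks of equal length are compared lexicographically. $\mathcal F^*$: infinite 0/1 sequences $\mu$ with $\mu(k)\mu(k+1)=0$ and no tail equal to $(1,0,1,0,\dots)$; $\mu|s=(\mu(1),\dots,\mu(s))$, $\mu\cdot\widehat F=\sum_{k\ge1}\mu(k)\omega^{k-1}$; $\mu\mapsto\phi(\mu\cdot\widehat F-1)$ is a bijection from $\{\mu\in\mathcal F^*:\mu(1)=1\}$ onto $(0,1)$. $K$ (positive integers, $K_n\to\infty$) has continuous leading block distribution under $\mathcal F$-expansion if: for every $s\ge2$ and leading block $\mathbf b$ of length $s$ the limit $\lim_n\#\{k\le n:\mathrm{LB}_s(K_k)=\mathbf b\}/n$ exists; for every $\mu\in\mathcal F^*$ with $\mu(1)=1$, $\lim_{s\to\infty}\lim_n\#\{k\le n:\mathrm{LB}_s(K_k)\le\mu|s\}/n$ exists; and $f_K^*:[0,1]\to[0,1]$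 defined by $f_K^*(0)=0$, $f_K^*(1)=1$, $f_K^*(\phi(\mu\cdot\widehat F-1))=$ that limit, is continuous and increasing. A uniform continuation of $F$ is an increasing continuous $f:[1,\infty)\to\mathbb{R}$ with $f(n)=F_n$ such that $f_n(p)=\frac{f(n+p)-f(n)}{f(n+1)-f(n)}$ converges uniformly on $[0,1]$ to an increasing continuous function $f_\infty$. $\{x_n\}$ equidistributed means $\lim_n\#\{k\le n:\{x_k\}\le\beta\}/n=\beta$ for all $\beta\in[0,1]$. *)

theory Defs
  imports "HOL-Analysis.Analysis"
begin

text \<open>Fibonacci numbers F with F 1 = 1, F 2 = 2, F (n+2) = F (n+1) + F n.
  (The value at 0 is a junk value chosen so that the recurrence also holds there.)\<close>
fun FF :: "nat \<Rightarrow> nat" where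
  "FF 0 = 1"
| "FF (Suc 0) = 1"
| "FF (Suc (Suc n)) = FF (Suc n) + FF n"

text \<open>Zeckendorf digit lists (epsilon(1), ..., epsilon(M)), most significant digit first.\<close>
definition zeck_valid :: "nat list \<Rightarrow> bool" where
  "zeck_valid xs \<longleftrightarrow> xs \<noteq> [] \<and> hd xs = 1 \<and> set xs \<subseteq> {0, 1} \<and>
     (\<forall>i. Suc i < length xs \<longrightarrow> xs ! i * xs ! Suc i = 0)"

text \<open>value: sum_{k=1}^M epsilon(k) F_{M-k+1}; list index i corresponds to k = i+1\<close>
definition zeck_val :: "nat list \<Rightarrow> nat" where
  "zeck_val xs = (\<Sum>i<length xs. xs ! i * FF (length xs - i))"

definition zeck :: "nat \<Rightarrow> nat list" where
  "zeck m = (THE xs. zeck_valid xs \<and> zeck_val xs = m)"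

definition LB :: "nat \<Rightarrow> nat \<Rightarrow> nat list option" where
  "LB s m = (if s \<le> length (zeck m) then Some (take s (zeck m)) else None)"

definition lex_le :: "nat list \<Rightarrow> nat list \<Rightarrow> bool" where
  "lex_le xs ys \<longleftrightarrow> xs = ys \<or> (xs, ys) \<in> lexord {(a, b). a < b}"

text \<open>The set F*; sequences are indexed from 0 here, i.e. mu k is the paper's mu(k+1).\<close>
definition Fstar :: "(nat \<Rightarrow> nat) set" where
  "Fstar = {\<mu>. (\<forall>k. \<mu> k \<in> {0, 1}) \<and> (\<forall>k. \<mu> k * \<mu> (Suc k) = 0) \<and>
              \<not> (\<exists>j. \<forall>i. \<mu> (j + 2 * i) = 1 \<and> \<mu> (j + 2 * i + 1) = 0)}"

definition restr :: "(nat \<Rightarrow> nat) \<Rightarrow> nat \<Rightarrow> nat list" where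
  "restr \<mu> s = map \<mu> [0..<s]"

definition phi :: real where "phi = (1 + sqrt 5) / 2"
definition omega :: real where "omega = 1 / phi"

text \<open>mu . F-hat = sum_{k\<ge>1} mu(k) omega^(k-1)\<close>
definition dotF :: "(nat \<Rightarrow> nat) \<Rightarrow> real" where
  "dotF \<mu> = (\<Sum>k. real (\<mu> k) * omega ^ k)"

definition LB_density :: "(nat \<Rightarrow> nat) \<Rightarrow> nat \<Rightarrow> nat list \<Rightarrow> nat \<Rightarrow> real" where
  "LB_density K s b n = real (card {k \<in> {1..n}. LB s (K k) = Some b}) / real n"

definition LB_cdf :: "(nat \<Rightarrow> nat) \<Rightarrow> (nat \<Rightarrow> nat) \<Rightarrow> nat \<Rightarrow> nat \<Rightarrow> real" where
  "LB_cdf K \<mu> s n =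
     real (card {k \<in> {1..n}. \<exists>c. LB s (K k) = Some c \<and> lex_le c (restr \<mu> s)}) / real n"

definition fKstar :: "(nat \<Rightarrow> nat) \<Rightarrow> real \<Rightarrow> real" where
  "fKstar K x = (if x = 0 then 0 else if x = 1 then 1 else
     (let \<mu> = (THE \<mu>. \<mu> \<in> Fstar \<and> \<mu> 0 = 1 \<and> phi * (dotF \<mu> - 1) = x)
      in lim (\<lambda>s. lim (LB_cdf K \<mu> s))))"

definition cont_LB_dist :: "(nat \<Rightarrow> nat) \<Rightarrow> bool" where
  "cont_LB_dist K \<longleftrightarrow>
     (\<forall>s\<ge>2. \<forall>b. zeck_valid b \<and> length b = s \<longrightarrow> convergent (LB_density K s b)) \<and>
     (\<forall>\<mu>\<in>Fstar. \<mu> 0 = 1 \<longrightarrow>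
        (\<forall>s. convergent (LB_cdf K \<mu> s)) \<and> convergent (\<lambda>s. lim (LB_cdf K \<mu> s))) \<and>
     continuous_on {0..1} (fKstar K) \<and> strict_mono_on {0..1} (fKstar K)"

definition unif_cont :: "(real \<Rightarrow> real) \<Rightarrow> (real \<Rightarrow> real) \<Rightarrow> bool" where
  "unif_cont f finf \<longleftrightarrow>
     continuous_on {1..} f \<and> strict_mono_on {1..} f \<and>
     (\<forall>n\<ge>1. f (real n) = real (FF n)) \<and>
     uniform_limit {0..1}
       (\<lambda>n p. (f (real n + p) - f (real n)) / (f (real n + 1) - f (real n))) finf sequentially \<and>
     continuous_on {0..1} finf \<and> strict_mono_on {0..1} finf"

definition equidistributed :: "(nat \<Rightarrow> real) \<Rightarrow> bool" where
  "equidistributed x \<longleftrightarrow>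
     (\<forall>\<beta>\<in>{0..1}. (\<lambda>n. real (card {k \<in> {1..n}. frac (x k) \<le> \<beta>}) / real n) \<longlonglongrightarrow> \<beta>)"

end

theory Submission
  imports Defs "HOL-Number_Theory.Fib"
begin

(* Every m >= 1 whose Zeckendorf expansion has length M is F_M + r F_(M-1) with
   r = zeck_frac m in [0,1). If the leading block of length s+1 of m is lexicographically at most
   mu|(s+1), then r is below the scaled value of that block, which for large M is about
   phi (mu . F-hat - 1) + omega^(s-1); if the block exceeds mu|(s+1), then r is above about
   phi (mu . F-hat - 1). So the proportion of k <= n with zeck_frac (K k) <= x is squeezed between
   the limiting leading block distributions at points phi (mu . F-hat - 1) just below and just above
   x. Such points are dense in [0,1], and continuity of f*_K gives the limit f*_K x.
   The continuation f (m + p) = F_m + F_(m-1) (f*_K)^-1 p has f_n = (f*_K)^-1 for every n, and the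
   fractional part of f^-1 (K k) is f*_K (zeck_frac (K k)), which is therefore equidistributed. *)

section \<open>Zeckendorf expansions\<close>

lemma FF_eq_fib: "FF n = fib (Suc n)"
  by (induction n rule: FF.induct) auto

lemma FF_pos: "0 < FF n"
  by (simp add: FF_eq_fib fib_neq_0_nat)

lemma FF_mono: "m \<le> n \<Longrightarrow> FF m \<le> FF n"
  by (simp add: FF_eq_fib fib_mono)

lemma FF_Suc: "1 \<le> n \<Longrightarrow> FF (Suc n) = FF n + FF (n - 1)"
  by (cases n) auto

lemma less_FF_Suc: "n < FF (Suc n)"
proof (induction n)
  case (Suc n)
  then show ?case using FF_pos[of n] by simp
qed simp

lemma FF_bracket_unique:
  assumes "FF a \<le> v" "v < FF (Suc a)" "FF b \<le> v" "v < FF (Suc b)"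
  shows "a = b"
  using FF_mono[of "Suc a" b] FF_mono[of "Suc b" a] assms by (cases a b rule: linorder_cases) auto

fun zeck_word :: "nat list \<Rightarrow> bool" where
  "zeck_word [] = True"
| "zeck_word [x] = (x \<le> 1)"
| "zeck_word (x # y # r) = (x \<le> 1 \<and> x * y = 0 \<and> zeck_word (y # r))"

lemma zeck_word_Cons: "zeck_word (x # xs) \<longleftrightarrow> x \<le> 1 \<and> (xs = [] \<or> x * hd xs = 0) \<and> zeck_word xs"
  by (cases xs) auto

lemma all_Suc_less_Cons:
  "(\<forall>i. Suc i < length (x # xs) \<longrightarrow> P i) \<longleftrightarrow> (xs \<noteq> [] \<longrightarrow> P 0) \<and> (\<forall>i. Suc i < length xs \<longrightarrow> P (Suc i))"
  by (auto simp: less_Suc_eq_0_disj) (metis not0_implies_Suc)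

lemma zeck_word_iff:
  "zeck_word xs \<longleftrightarrow> set xs \<subseteq> {0, 1} \<and> (\<forall>i. Suc i < length xs \<longrightarrow> xs ! i * xs ! Suc i = 0)"
proof (induction xs)
  case (Cons x xs)
  have "(\<forall>i. Suc i < length (x # xs) \<longrightarrow> (x # xs) ! i * (x # xs) ! Suc i = 0) \<longleftrightarrow>
      (xs = [] \<or> x * hd xs = 0) \<and> (\<forall>i. Suc i < length xs \<longrightarrow> xs ! i * xs ! Suc i = 0)"
    unfolding all_Suc_less_Cons by (auto simp: hd_conv_nth)
  then show ?case using Cons by (auto simp: zeck_word_Cons)
qed simp

lemma zeck_valid_iff: "zeck_valid xs \<longleftrightarrow> xs \<noteq> [] \<and> hd xs = 1 \<and> zeck_word xs"
  by (auto simp: zeck_valid_def zeck_word_iff)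

lemma zeck_val_Nil [simp]: "zeck_val [] = 0"
  by (simp add: zeck_val_def)

lemma zeck_val_Cons [simp]: "zeck_val (x # xs) = x * FF (Suc (length xs)) + zeck_val xs"
  unfolding zeck_val_def length_Cons sum.lessThan_Suc_shift by simp

lemma zeck_val_less_FF: "zeck_word xs \<Longrightarrow> zeck_val xs < FF (Suc (length xs))"
proof (induction xs rule: induct_list012)
  case (3 x y r)
  show ?case
  proof (cases "x = 0")
    case True
    then show ?thesis
      using 3 FF_mono[of "Suc (length (y # r))" "Suc (length (x # y # r))"] by auto
  next
    case False
    then have "x = 1" "y = 0" "zeck_word r" using "3.prems" by (auto simp: zeck_word_Cons)
    then show ?thesis using "3.IH"(1) by simp
  qed
qed auto

lemma FF_le_zeck_val: "xs \<noteq> [] \<Longrightarrow> hd xs = 1 \<Longrightarrow> FF (length xs) \<le> zeck_val xs"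
  by (cases xs) auto

lemma zeck_valid_bounds:
  "zeck_valid xs \<Longrightarrow> FF (length xs) \<le> zeck_val xs \<and> zeck_val xs < FF (Suc (length xs))"
  using FF_le_zeck_val zeck_val_less_FF by (auto simp: zeck_valid_iff)

lemma zeck_val_lexord_less:
  "zeck_word u \<Longrightarrow> zeck_word v \<Longrightarrow> length u = length v \<Longrightarrow>
    (u, v) \<in> lexord {(a, b). a < b} \<Longrightarrow> zeck_val u < zeck_val v"
proof (induction u arbitrary: v)
  case (Cons x u)
  then obtain y v' where v: "v = y # v'" by (cases v) auto
  show ?case
  proof (cases "x < y")
    case True
    then have "x = 0" "y = 1" using Cons.prems(2) v by (auto simp: zeck_word_Cons)
    then show ?thesis using Cons.prems v zeck_val_less_FF[of u] by (auto simp: zeck_word_Cons)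
  next
    case False
    then show ?thesis using Cons v by (auto simp: zeck_word_Cons)
  qed
qed simp

lemma lexord_less_linear:
  "(u, v) \<in> lexord {(a, b). (a::nat) < b} \<or> u = v \<or> (v, u) \<in> lexord {(a, b). a < b}"
  by (rule lexord_linear) auto

lemma zeck_word_eqI:
  assumes "zeck_word u" "zeck_word v" "length u = length v" "zeck_val u = zeck_val v"
  shows "u = v"
  using lexord_less_linear[of u v] zeck_val_lexord_less assms by (metis less_irrefl)

lemma zeck_word_exists: "m < FF (Suc n) \<Longrightarrow> \<exists>xs. zeck_word xs \<and> length xs = n \<and> zeck_val xs = m"
proof (induction n arbitrary: m rule: FF.induct)
  case 1
  then show ?case by simp
next
  case 2
  then show ?case by (intro exI[of _ "[m]"]) auto
next
  case (3 n)
  show ?case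
  proof (cases "m < FF (Suc (Suc n))")
    case True
    then obtain ys where "zeck_word ys" "length ys = Suc n" "zeck_val ys = m"
      using "3.IH"(1) by blast
    then show ?thesis by (intro exI[of _ "0 # ys"]) (auto simp: zeck_word_Cons)
  next
    case False
    then have "m - FF (Suc (Suc n)) < FF (Suc n)" using "3.prems" by simp
    then obtain ys where "zeck_word ys" "length ys = n" "zeck_val ys = m - FF (Suc (Suc n))"
      using "3.IH"(2) by blast
    then show ?thesis using False by (intro exI[of _ "1 # 0 # ys"]) (auto simp: zeck_word_Cons)
  qed
qed

lemma zeck_val_dropWhile_zero: "zeck_val (dropWhile (\<lambda>x. x = 0) xs) = zeck_val xs"
  by (induction xs) auto

lemma zeck_word_dropWhile: "zeck_word xs \<Longrightarrow> zeck_word (dropWhile P xs)"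
  by (induction xs) (auto simp: zeck_word_Cons)

lemma zeck_exists: "1 \<le> m \<Longrightarrow> \<exists>xs. zeck_valid xs \<and> zeck_val xs = m"
proof -
  assume m: "1 \<le> m"
  obtain xs where xs: "zeck_word xs" "zeck_val xs = m"
    using zeck_word_exists[OF less_FF_Suc] by blast
  define ys where "ys = dropWhile (\<lambda>x. x = 0) xs"
  have val: "zeck_val ys = m" and word: "zeck_word ys"
    using xs by (simp_all add: ys_def zeck_val_dropWhile_zero zeck_word_dropWhile)
  then have "ys \<noteq> []" using m by auto
  moreover have "hd ys \<noteq> 0" using \<open>ys \<noteq> []\<close> hd_dropWhile unfolding ys_def by blast
  moreover have "hd ys \<le> 1" using word \<open>ys \<noteq> []\<close> by (cases ys) (auto simp: zeck_word_Cons)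
  ultimately show ?thesis using val word by (auto simp: zeck_valid_iff)
qed

lemma zeck_correct: "1 \<le> m \<Longrightarrow> zeck_valid (zeck m) \<and> zeck_val (zeck m) = m"
  unfolding zeck_def
proof (rule theI')
  assume "1 \<le> m"
  then obtain xs where xs: "zeck_valid xs" "zeck_val xs = m" using zeck_exists by blast
  have "ys = xs" if "zeck_valid ys" "zeck_val ys = m" for ys
    using zeck_valid_bounds[OF xs(1)] zeck_valid_bounds[OF that(1)] xs that
    by (intro zeck_word_eqI) (auto simp: zeck_valid_iff intro: FF_bracket_unique)
  then show "\<exists>!xs. zeck_valid xs \<and> zeck_val xs = m" using xs by blast
qed

lemma length_zeck_bounds: "1 \<le> m \<Longrightarrow> FF (length (zeck m)) \<le> m \<and> m < FF (Suc (length (zeck m)))"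
  using zeck_valid_bounds zeck_correct by metis

lemma length_zeck_pos: "1 \<le> m \<Longrightarrow> 1 \<le> length (zeck m)"
  using zeck_correct[of m] by (cases "zeck m") (auto simp: zeck_valid_iff)

lemma zeck_val_replicate_zero [simp]: "zeck_val (replicate n 0) = 0"
  by (induction n) auto

lemma zeck_val_append: "zeck_val (xs @ ys) = zeck_val (xs @ replicate (length ys) 0) + zeck_val ys"
  by (induction xs) auto

lemma zeck_word_replicate_zero: "zeck_word (replicate n 0)"
  by (induction n) (auto simp: zeck_word_Cons)

lemma zeck_word_append_zeros: "zeck_word xs \<Longrightarrow> zeck_word (xs @ replicate n 0)"
  by (induction xs) (auto simp: zeck_word_Cons hd_append zeck_word_replicate_zero)

lemma zeck_word_drop: "zeck_word xs \<Longrightarrow> zeck_word (drop n xs)"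
  by (induction xs arbitrary: n) (auto simp: zeck_word_Cons drop_Cons')

lemma zeck_val_pad_less:
  assumes "zeck_word d" "zeck_word c" "length c \<le> length d"
    and "(c, take (length c) d) \<in> lexord {(a, b). a < b}"
  shows "zeck_val (c @ replicate (length d - length c) 0) < zeck_val d"
proof -
  have "(c @ replicate (length d - length c) 0, take (length c) d @ drop (length c) d)
      \<in> lexord {(a, b). a < b}"
    using assms(3,4) by (intro lexord_sufI) auto
  then show ?thesis
    using assms by (intro zeck_val_lexord_less) (auto intro: zeck_word_append_zeros)
qed

lemma zeck_val_less_pad:
  assumes "zeck_word d" "zeck_word c" "length c \<le> length d"
    and "lex_le (take (length c) d) c"
  shows "zeck_val d <
    zeck_val (c @ replicate (length d - length c) 0) + FF (Suc (length d - length c))"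
proof (cases "take (length c) d = c")
  case True
  then have "zeck_val d =
      zeck_val (c @ replicate (length d - length c) 0) + zeck_val (drop (length c) d)"
    using zeck_val_append[of c "drop (length c) d"] by (metis append_take_drop_id length_drop)
  moreover have "zeck_val (drop (length c) d) < FF (Suc (length d - length c))"
    using zeck_val_less_FF[OF zeck_word_drop[OF assms(1)]] by simp
  ultimately show ?thesis by simp
next
  case False
  then have "(take (length c) d @ drop (length c) d, c @ replicate (length d - length c) 0)
      \<in> lexord {(a, b). a < b}"
    using assms(3,4) by (intro lexord_sufI) (auto simp: lex_le_def)
  then have "zeck_val d < zeck_val (c @ replicate (length d - length c) 0)"
    using assms by (intro zeck_val_lexord_less) (auto intro: zeck_word_append_zeros)
  then show ?thesis by simp
qed

section \<open>The golden ratio\<close>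

lemma phi_gt_1: "1 < phi"
  by (simp add: phi_def)

lemma omega_pos: "0 < omega"
  using phi_gt_1 by (simp add: omega_def)

lemma omega_less_1: "omega < 1"
  using phi_gt_1 by (simp add: omega_def)

lemma phi_omega: "phi * omega = 1"
  using phi_gt_1 by (simp add: omega_def)

lemma phi_eq: "phi = 1 + omega"
proof -
  have "phi * phi = phi + 1"
    by (simp add: phi_def field_simps)
  then show ?thesis using phi_gt_1 by (simp add: omega_def field_simps)
qed

lemma omega_sq: "omega + omega ^ 2 = 1"
proof -
  have "omega * (1 + omega) = 1" using phi_eq phi_omega by (simp add: mult.commute)
  then show ?thesis by (simp add: power2_eq_square algebra_simps)
qed

lemma omega_sq_phi: "omega ^ 2 * phi = phi - 1"
  using phi_omega phi_eq by (simp add: power2_eq_square mult.commute mult.left_commute)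

lemma omega_power_pred_tendsto: "(\<lambda>s. omega ^ (s - 1)) \<longlonglongrightarrow> 0"
  by (rule LIMSEQ_offset[where k = 1])
    (use LIMSEQ_power_zero[of omega] omega_pos omega_less_1 in simp)

lemma FF_ratio_tendsto: "(\<lambda>n. real (FF n) / real (FF (n + j))) \<longlonglongrightarrow> omega ^ j"
proof -
  define a where "a n = real (fib n) / (phi ^ n / sqrt 5)" for n
  have a: "a \<longlonglongrightarrow> 1"
    unfolding a_def phi_def by (rule fib_asymptotics)
  have "(\<lambda>n. a (n + 1) / a (n + (1 + j)) * omega ^ j) \<longlonglongrightarrow> 1 / 1 * omega ^ j"
    by (intro tendsto_intros LIMSEQ_ignore_initial_segment[OF a]) simp
  moreover have "real (FF n) / real (FF (n + j)) = a (n + 1) / a (n + (1 + j)) * omega ^ j" for n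
    using phi_gt_1 by (simp add: a_def FF_eq_fib omega_def power_add field_simps)
  ultimately show ?thesis by simp
qed

lemma FF_diff_ratio_tendsto:
  assumes "j \<le> i"
  shows "(\<lambda>n. real (FF (n - i)) / real (FF (n - j))) \<longlonglongrightarrow> omega ^ (i - j)"
proof (rule LIMSEQ_offset[where k = i])
  have "n + i - j = n + (i - j)" for n using assms by simp
  then show "(\<lambda>n. real (FF (n + i - i)) / real (FF (n + i - j))) \<longlonglongrightarrow> omega ^ (i - j)"
    using FF_ratio_tendsto[of "i - j"] by simp
qed

section \<open>Sequences in F*\<close>

definition zeck_seq :: "(nat \<Rightarrow> nat) \<Rightarrow> bool" where
  "zeck_seq \<mu> \<longleftrightarrow> (\<forall>k. \<mu> k \<le> 1) \<and> (\<forall>k. \<mu> k * \<mu> (Suc k) = 0)"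

lemma Fstar_imp_zeck_seq: "\<mu> \<in> Fstar \<Longrightarrow> zeck_seq \<mu>"
  unfolding Fstar_def zeck_seq_def by (force simp: le_Suc_eq)

lemma zeck_seq_Suc: "zeck_seq b \<Longrightarrow> zeck_seq (\<lambda>k. b (Suc k))"
  by (simp add: zeck_seq_def)

lemma zeck_seq_case_nat: "zeck_seq (case_nat a b) \<longleftrightarrow> a \<le> 1 \<and> a * b 0 = 0 \<and> zeck_seq b"
proof -
  have all_nat: "(\<forall>k. P k) \<longleftrightarrow> P 0 \<and> (\<forall>k. P (Suc k))" for P :: "nat \<Rightarrow> bool"
    by (metis not0_implies_Suc)
  show ?thesis unfolding zeck_seq_def by (subst (1 2) all_nat) auto
qed

lemma summable_dotF: "zeck_seq b \<Longrightarrow> summable (\<lambda>k. real (b k) * omega ^ k)"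
proof (rule summable_comparison_test')
  show "summable (\<lambda>k. omega ^ k)"
    using omega_pos omega_less_1 by (intro summable_geometric) simp
  show "norm (real (b k) * omega ^ k) \<le> omega ^ k" if "zeck_seq b" for k
    using that omega_pos by (simp add: zeck_seq_def abs_mult mult_le_cancel_right1)
qed

lemma dotF_nonneg: "zeck_seq b \<Longrightarrow> 0 \<le> dotF b"
  unfolding dotF_def using omega_pos by (intro suminf_nonneg summable_dotF) auto

lemma dotF_split_head:
  assumes "zeck_seq b"
  shows "dotF b = real (b 0) + omega * dotF (\<lambda>k. b (Suc k))"
proof -
  have "omega * dotF (\<lambda>k. b (Suc k)) = (\<Sum>k. real (b (Suc k)) * omega ^ Suc k)"
    unfolding dotF_def using summable_dotF[OF zeck_seq_Suc[OF assms]]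
    by (simp add: suminf_mult[symmetric] mult_ac)
  also have "\<dots> = dotF b - real (b 0)"
    unfolding dotF_def using suminf_split_head[OF summable_dotF[OF assms]] by simp
  finally show ?thesis by simp
qed

lemma zeck_seq_head: "zeck_seq b \<Longrightarrow> b 0 = 0 \<or> b 0 = 1 \<and> b 1 = 0"
  unfolding zeck_seq_def by (metis One_nat_def le_Suc_eq le_zero_eq mult_1)

lemma partial_dotF_le_phi: "zeck_seq b \<Longrightarrow> (\<Sum>k<n. real (b k) * omega ^ k) \<le> phi"
proof (induction n arbitrary: b rule: less_induct)
  case (less n)
  have split: "(\<Sum>k<Suc m. real (c k) * omega ^ k) =
      real (c 0) + omega * (\<Sum>k<m. real (c (Suc k)) * omega ^ k)"
    for c :: "nat \<Rightarrow> nat" and m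
    by (simp add: sum.lessThan_Suc_shift sum_distrib_left mult_ac del: sum.lessThan_Suc)
  have b1: "zeck_seq (\<lambda>k. b (Suc k))" and b2: "zeck_seq (\<lambda>k. b (Suc (Suc k)))"
    using zeck_seq_Suc[OF less.prems] zeck_seq_Suc by blast+
  consider "n = 0" | m where "n = Suc m" "b 0 = 0" | "n = 1" "b 0 = 1"
    | m where "n = Suc (Suc m)" "b 0 = 1" "b 1 = 0"
    using zeck_seq_head[OF less.prems] by (metis One_nat_def not0_implies_Suc)
  then show ?case
  proof cases
    case (2 m)
    have "(\<Sum>k<m. real (b (Suc k)) * omega ^ k) \<le> phi"
      using less.IH[OF _ b1] 2 by simp
    then have "omega * (\<Sum>k<m. real (b (Suc k)) * omega ^ k) \<le> omega * phi"
      using omega_pos by (intro mult_left_mono) auto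
    then show ?thesis using 2 phi_omega phi_gt_1 split[of b m] by (simp add: mult.commute)
  next
    case (4 m)
    have "(\<Sum>k<m. real (b (Suc (Suc k))) * omega ^ k) \<le> phi"
      using less.IH[OF _ b2] 4 by simp
    then have "omega ^ 2 * (\<Sum>k<m. real (b (Suc (Suc k))) * omega ^ k) \<le> omega ^ 2 * phi"
      using omega_pos by (intro mult_left_mono) auto
    moreover note omega_sq_phi
    moreover have "(\<Sum>k<n. real (b k) * omega ^ k) =
        1 + omega ^ 2 * (\<Sum>k<m. real (b (Suc (Suc k))) * omega ^ k)"
      using 4 split[of b "Suc m"] split[of "\<lambda>k. b (Suc k)" m]
      by (simp add: power2_eq_square)
    ultimately show ?thesis by linarith
  qed (use phi_gt_1 in simp_all)
qed

lemma dotF_le_phi: "zeck_seq b \<Longrightarrow> dotF b \<le> phi"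
  unfolding dotF_def by (intro suminf_le_const summable_dotF partial_dotF_le_phi)

lemma dotF_le_1:
  assumes "zeck_seq b" "b 0 = 0"
  shows "dotF b \<le> 1"
proof -
  have "omega * dotF (\<lambda>k. b (Suc k)) \<le> omega * phi"
    using dotF_le_phi[OF zeck_seq_Suc[OF assms(1)]] omega_pos by (intro mult_left_mono) auto
  then show ?thesis
    using dotF_split_head[OF assms(1)] assms(2) phi_omega by (simp add: mult.commute)
qed

lemma dotF_less_phi_if_not_alternating:
  "zeck_seq b \<Longrightarrow> \<not> (b (2 * j) = 1 \<and> b (2 * j + 1) = 0) \<Longrightarrow> dotF b < phi"
proof (induction j arbitrary: b)
  case 0
  then show ?case using zeck_seq_head[of b] dotF_le_1[of b] phi_gt_1 by auto
next
  case (Suc j)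
  show ?case
  proof (cases "b 0 = 1 \<and> b 1 = 0")
    case True
    have "zeck_seq (\<lambda>k. b (Suc (Suc k)))" using Suc.prems(1) by (intro zeck_seq_Suc)
    then have "dotF (\<lambda>k. b (Suc (Suc k))) < phi"
      using Suc.IH[of "\<lambda>k. b (Suc (Suc k))"] Suc.prems(2) by simp
    then have "omega ^ 2 * dotF (\<lambda>k. b (Suc (Suc k))) < omega ^ 2 * phi"
      using omega_pos by simp
    moreover note omega_sq_phi
    moreover have "dotF b = 1 + omega ^ 2 * dotF (\<lambda>k. b (Suc (Suc k)))"
      using True dotF_split_head[OF Suc.prems(1)] dotF_split_head[OF zeck_seq_Suc[OF Suc.prems(1)]]
      by (simp add: power2_eq_square)
    ultimately show ?thesis by linarith
  next
    case False
    then show ?thesis using Suc.prems(1) zeck_seq_head[of b] dotF_le_1[of b] phi_gt_1 by auto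
  qed
qed

lemma Fstar_Suc: "\<mu> \<in> Fstar \<Longrightarrow> (\<lambda>k. \<mu> (Suc k)) \<in> Fstar"
  unfolding Fstar_def by (simp only: mem_Collect_eq add_Suc[symmetric]) blast

lemma dotF_less_phi: "\<mu> \<in> Fstar \<Longrightarrow> dotF \<mu> < phi"
proof -
  assume \<mu>: "\<mu> \<in> Fstar"
  then have "\<not> (\<forall>i. \<mu> (0 + 2 * i) = 1 \<and> \<mu> (0 + 2 * i + 1) = 0)"
    unfolding Fstar_def by blast
  then obtain j where "\<not> (\<mu> (2 * j) = 1 \<and> \<mu> (2 * j + 1) = 0)" by auto
  then show ?thesis using dotF_less_phi_if_not_alternating Fstar_imp_zeck_seq[OF \<mu>] by blast
qed
lemma dotF_less:
  assumes "\<nu> \<in> Fstar" "zeck_seq \<mu>" "\<forall>k<j. \<mu> k = \<nu> k" "\<mu> j = 1" "\<nu> j = 0"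
  shows "dotF \<nu> < dotF \<mu>"
  using assms
proof (induction j arbitrary: \<mu> \<nu>)
  case 0
  have "dotF \<nu> < omega * phi"
    using dotF_split_head[OF Fstar_imp_zeck_seq[OF "0.prems"(1)]]
      dotF_less_phi[OF Fstar_Suc[OF "0.prems"(1)]]
      omega_pos "0.prems"(5) by simp
  moreover have "1 \<le> dotF \<mu>"
    using dotF_split_head[OF "0.prems"(2)] dotF_nonneg[OF zeck_seq_Suc[OF "0.prems"(2)]]
      omega_pos "0.prems"(4)
    by simp
  ultimately show ?case using phi_omega by (simp add: mult.commute)
next
  case (Suc j)
  have "dotF (\<lambda>k. \<nu> (Suc k)) < dotF (\<lambda>k. \<mu> (Suc k))"
    using Suc.prems by (intro Suc.IH Fstar_Suc zeck_seq_Suc) auto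
  then show ?case
    using dotF_split_head[OF Fstar_imp_zeck_seq[OF Suc.prems(1)]] dotF_split_head[OF Suc.prems(2)]
      Suc.prems(3) omega_pos by simp
qed

lemma inj_on_dotF: "inj_on dotF Fstar"
proof (rule inj_onI, rule ccontr)
  fix \<mu> \<nu> assume \<mu>: "\<mu> \<in> Fstar" and \<nu>: "\<nu> \<in> Fstar" and eq: "dotF \<mu> = dotF \<nu>" and "\<mu> \<noteq> \<nu>"
  then obtain j where j: "\<mu> j \<noteq> \<nu> j" "\<forall>k<j. \<mu> k = \<nu> k"
    using exists_least_iff[of "\<lambda>k. \<mu> k \<noteq> \<nu> k"] by auto
  have "\<mu> j \<le> 1" "\<nu> j \<le> 1"
    using Fstar_imp_zeck_seq[OF \<mu>] Fstar_imp_zeck_seq[OF \<nu>] by (simp_all add: zeck_seq_def)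
  with j(1) consider "\<mu> j = 1" "\<nu> j = 0" | "\<mu> j = 0" "\<nu> j = 1" by linarith
  then show False
  proof cases
    case 1
    then have "dotF \<nu> < dotF \<mu>" using dotF_less[OF \<nu> Fstar_imp_zeck_seq[OF \<mu>]] j(2) by blast
    then show False using eq by simp
  next
    case 2
    moreover have "\<forall>k<j. \<nu> k = \<mu> k" using j(2) by simp
    ultimately have "dotF \<mu> < dotF \<nu>" using dotF_less[OF \<mu> Fstar_imp_zeck_seq[OF \<nu>]] by blast
    then show False using eq by simp
  qed
qed

lemma dotF_case_nat: "zeck_seq (case_nat a b) \<Longrightarrow> dotF (case_nat a b) = real a + omega * dotF b"
  using dotF_split_head[of "case_nat a b"] by simp

lemma dotF_approx:
  assumes "0 \<le> t" "t < 1"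
  shows "\<exists>b N. zeck_seq b \<and> b 0 = 0 \<and> (\<forall>i\<ge>N. b i = 0) \<and> dotF b \<le> t \<and> t < dotF b + omega ^ s"
  using assms
proof (induction s arbitrary: t)
  case 0
  then show ?case by (intro exI[of _ "\<lambda>_. 0"] exI[of _ 0]) (auto simp: zeck_seq_def dotF_def)
next
  case (Suc s)
  show ?case
  proof (cases "t < omega")
    case True
    obtain b N where b: "zeck_seq b" "b 0 = 0" "\<forall>i\<ge>N. b i = 0"
      "dotF b \<le> t / omega" "t / omega < dotF b + omega ^ s"
      using Suc.IH[of "t / omega"] Suc.prems True omega_pos by auto
    have c: "zeck_seq (case_nat 0 b)" using b by (simp add: zeck_seq_case_nat)
    show ?thesis
      using b omega_pos dotF_case_nat[OF c]
      by (intro exI[of _ "case_nat 0 b"] exI[of _ "Suc N"] conjI c)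
        (auto simp: field_simps split: nat.split)
  next
    case False
    have t': "0 \<le> (t - omega) / omega ^ 2" "(t - omega) / omega ^ 2 < 1"
      using False Suc.prems omega_pos omega_sq by (simp_all add: field_simps)
    obtain b N where b: "zeck_seq b" "b 0 = 0" "\<forall>i\<ge>N. b i = 0"
      "dotF b \<le> (t - omega) / omega ^ 2" "(t - omega) / omega ^ 2 < dotF b + omega ^ s"
      using Suc.IH[OF t'] by auto
    define c where "c = case_nat 0 (case_nat 1 b)"
    have c1: "zeck_seq (case_nat 1 b)" and c: "zeck_seq c"
      using b by (simp_all add: c_def zeck_seq_case_nat)
    have "dotF c = omega + omega ^ 2 * dotF b"
      using dotF_case_nat[OF c[unfolded c_def]] dotF_case_nat[OF c1]
      by (simp add: c_def power2_eq_square algebra_simps)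
    then have "dotF c \<le> t" "t < dotF c + omega ^ Suc (Suc s)"
      using b(4,5) omega_pos by (simp_all add: field_simps power2_eq_square)
    moreover have "omega ^ Suc (Suc s) \<le> omega ^ Suc s"
      using omega_pos omega_less_1 by (intro power_decreasing) auto
    moreover have "c 0 = 0" "\<forall>i\<ge>Suc (Suc N). c i = 0"
      using b(3) by (auto simp: c_def split: nat.split)
    ultimately show ?thesis
      using c by (intro exI[of _ c] exI[of _ "Suc (Suc N)"]) auto
  qed
qed

lemma Fstar_if_eventually_zero:
  assumes "zeck_seq \<mu>" "\<forall>i\<ge>N. \<mu> i = 0"
  shows "\<mu> \<in> Fstar"
proof -
  have "\<not> (\<forall>i. \<mu> (j + 2 * i) = 1)" for j
    using assms(2) by (metis le_add2 mult_2 trans_le_add2 zero_neq_one)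
  then show ?thesis
    using assms(1) unfolding Fstar_def zeck_seq_def by (force simp: le_Suc_eq)
qed

lemma Fstar_points_dense:
  assumes "0 \<le> u" "u < v" "v \<le> 1"
  shows "\<exists>\<mu>\<in>Fstar. \<mu> 0 = 1 \<and> u < phi * (dotF \<mu> - 1) \<and> phi * (dotF \<mu> - 1) < v"
proof -
  obtain s where s: "omega ^ s < (v - u) / 2"
    using real_arch_pow_inv[of "(v - u) / 2" omega] assms omega_less_1 by auto
  obtain b N where b: "zeck_seq b" "b 0 = 0" "\<forall>i\<ge>N. b i = 0"
    "dotF b \<le> (u + v) / 2" "(u + v) / 2 < dotF b + omega ^ s"
    using dotF_approx[of "(u + v) / 2" s] assms by auto
  define \<mu> where "\<mu> = case_nat 1 b"
  have \<mu>: "zeck_seq \<mu>" using b by (simp add: \<mu>_def zeck_seq_case_nat)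
  moreover have "\<forall>i\<ge>Suc N. \<mu> i = 0" using b(3) by (auto simp: \<mu>_def split: nat.split)
  ultimately have "\<mu> \<in> Fstar" by (rule Fstar_if_eventually_zero)
  moreover have "phi * (dotF \<mu> - 1) = dotF b"
    using dotF_split_head[OF \<mu>] phi_omega by (simp add: \<mu>_def mult.assoc[symmetric])
  ultimately show ?thesis using b(4,5) s by (intro bexI[of _ \<mu>]) (auto simp: \<mu>_def)
qed

lemma partial_dotF_tail_tendsto:
  assumes "zeck_seq \<mu>" "\<mu> 0 = 1"
  shows "(\<lambda>s. \<Sum>i<s. real (\<mu> (Suc i)) * omega ^ i) \<longlonglongrightarrow> phi * (dotF \<mu> - 1)"
proof -
  have "phi * (dotF \<mu> - 1) = dotF (\<lambda>k. \<mu> (Suc k))"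
    using dotF_split_head[OF assms(1)] assms(2) phi_omega by (simp add: mult.assoc[symmetric])
  then show ?thesis
    unfolding dotF_def using summable_LIMSEQ[OF summable_dotF[OF zeck_seq_Suc[OF assms(1)]]] by simp
qed

lemma fKstar_Fstar_point:
  assumes "\<mu> \<in> Fstar" "\<mu> 0 = 1" "0 < phi * (dotF \<mu> - 1)" "phi * (dotF \<mu> - 1) < 1"
  shows "fKstar K (phi * (dotF \<mu> - 1)) = lim (\<lambda>s. lim (LB_cdf K \<mu> s))"
proof -
  have "(THE \<nu>. \<nu> \<in> Fstar \<and> \<nu> 0 = 1 \<and> phi * (dotF \<nu> - 1) = phi * (dotF \<mu> - 1)) = \<mu>"
    using assms(1,2) inj_on_dotF phi_gt_1 by (intro the_equality) (auto dest: inj_onD)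
  moreover have "phi * (dotF \<mu> - 1) \<noteq> 0" "phi * (dotF \<mu> - 1) \<noteq> 1" using assms(3,4) by auto
  ultimately show ?thesis unfolding fKstar_def Let_def by (simp only: if_False)
qed

section \<open>Leading blocks and the F-fractional part\<close>

lemma length_restr [simp]: "length (restr \<mu> s) = s"
  by (simp add: restr_def)

lemma zeck_word_restr: "zeck_seq \<mu> \<Longrightarrow> zeck_word (restr \<mu> s)"
  unfolding zeck_word_iff zeck_seq_def restr_def by (force simp: le_Suc_eq)

lemma zeck_val_restr_pad:
  assumes "s \<le> M"
  shows "zeck_val (restr \<mu> s @ replicate (M - s) 0) = (\<Sum>i<s. \<mu> i * FF (M - i))"
proof -
  have "zeck_val (restr \<mu> s @ replicate (M - s) 0) = (\<Sum>i<M. if i < s then \<mu> i * FF (M - i) else 0)"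
    using assms unfolding zeck_val_def by (intro sum.cong) (auto simp: restr_def nth_append)
  also have "\<dots> = (\<Sum>i<s. \<mu> i * FF (M - i))"
  proof -
    have "{..<M} \<inter> {i. i < s} = {..<s}" using assms by auto
    then show ?thesis by (simp add: sum.If_cases)
  qed
  finally show ?thesis .
qed

definition zeck_frac :: "nat \<Rightarrow> real" where
  "zeck_frac m = (real m - real (FF (length (zeck m)))) / real (FF (length (zeck m) - 1))"

lemma zeck_frac_decomp:
  "real m = real (FF (length (zeck m))) + real (FF (length (zeck m) - 1)) * zeck_frac m"
  using FF_pos[of "length (zeck m) - 1"] by (simp add: zeck_frac_def)

lemma zeck_frac_bounds: "1 \<le> m \<Longrightarrow> 0 \<le> zeck_frac m \<and> zeck_frac m < 1"
proof -
  assume m: "1 \<le> m"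
  define M where "M = length (zeck m)"
  have "FF M \<le> m" "m < FF M + FF (M - 1)"
    using length_zeck_bounds[OF m] FF_Suc[OF length_zeck_pos[OF m]] by (simp_all add: M_def)
  then show ?thesis
    using FF_pos[of "M - 1"] by (simp add: zeck_frac_def M_def[symmetric] field_simps)
qed

definition prefix_ratio :: "(nat \<Rightarrow> nat) \<Rightarrow> nat \<Rightarrow> nat \<Rightarrow> real" where
  "prefix_ratio \<mu> s M = (\<Sum>i<s. real (\<mu> (Suc i)) * (real (FF (M - Suc i)) / real (FF (M - 1))))"

lemma prefix_ratio_tendsto: "(\<lambda>M. prefix_ratio \<mu> s M) \<longlonglongrightarrow> (\<Sum>i<s. real (\<mu> (Suc i)) * omega ^ i)"
proof -
  have "(\<lambda>M. real (FF (M - Suc i)) / real (FF (M - 1))) \<longlonglongrightarrow> omega ^ i" for i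
    using FF_diff_ratio_tendsto[of 1 "Suc i"] by simp
  then show ?thesis
    unfolding prefix_ratio_def by (intro tendsto_intros)
qed

lemma zeck_val_restr_pad_eq:
  assumes "\<mu> 0 = 1" "Suc s \<le> M"
  shows "real (zeck_val (restr \<mu> (Suc s) @ replicate (M - Suc s) 0)) =
    real (FF M) + real (FF (M - 1)) * prefix_ratio \<mu> s M"
proof -
  have "zeck_val (restr \<mu> (Suc s) @ replicate (M - Suc s) 0) =
      FF M + (\<Sum>i<s. \<mu> (Suc i) * FF (M - Suc i))"
    using assms by (simp add: zeck_val_restr_pad sum.lessThan_Suc_shift del: sum.lessThan_Suc)
  then show ?thesis
    using FF_pos[of "M - 1"] by (simp add: prefix_ratio_def sum_distrib_left)
qed

lemma LB_eq_Some_iff: "LB s m = Some c \<longleftrightarrow> s \<le> length (zeck m) \<and> c = take s (zeck m)"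
  by (auto simp: LB_def)

lemma prefix_ratio_less_zeck_frac:
  assumes "1 \<le> m" "zeck_seq \<mu>" "\<mu> 0 = 1" "LB (Suc s) m = Some c"
    and "\<not> lex_le c (restr \<mu> (Suc s))"
  shows "prefix_ratio \<mu> s (length (zeck m)) < zeck_frac m"
proof -
  define M where "M = length (zeck m)"
  have c: "Suc s \<le> M" "c = take (Suc s) (zeck m)"
    using assms(4) by (simp_all add: M_def LB_eq_Some_iff)
  from lexord_less_linear assms(5) c(2)
  have "(restr \<mu> (Suc s), take (Suc s) (zeck m)) \<in> lexord {(a, b). a < b}"
    by (auto simp: lex_le_def)
  then have "zeck_val (restr \<mu> (Suc s) @ replicate (M - Suc s) 0) < m"
    using zeck_val_pad_less[of "zeck m" "restr \<mu> (Suc s)"] zeck_correct[OF assms(1)] assms(2) c(1)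
    by (simp add: M_def zeck_valid_iff zeck_word_restr)
  then have "real (FF (M - 1)) * prefix_ratio \<mu> s M < real (FF (M - 1)) * zeck_frac m"
    using zeck_val_restr_pad_eq[of \<mu> s M] zeck_frac_decomp[of m] assms(3) c(1)
    by (simp add: M_def)
  then show ?thesis using FF_pos[of "M - 1"] by (simp add: M_def)
qed

lemma zeck_frac_less_prefix_ratio:
  assumes "1 \<le> m" "zeck_seq \<mu>" "\<mu> 0 = 1" "LB (Suc s) m = Some c"
    and "lex_le c (restr \<mu> (Suc s))"
  shows "zeck_frac m < prefix_ratio \<mu> s (length (zeck m)) +
    real (FF (length (zeck m) - s)) / real (FF (length (zeck m) - 1))"
proof -
  define M where "M = length (zeck m)"
  have c: "Suc s \<le> M" "c = take (Suc s) (zeck m)"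
    using assms(4) by (simp_all add: M_def LB_eq_Some_iff)
  have "m < zeck_val (restr \<mu> (Suc s) @ replicate (M - Suc s) 0) + FF (M - s)"
    using zeck_val_less_pad[of "zeck m" "restr \<mu> (Suc s)"] zeck_correct[OF assms(1)] assms(2,5) c
    by (simp add: M_def zeck_valid_iff zeck_word_restr Suc_diff_Suc)
  then have "real (FF (M - 1)) * zeck_frac m <
      real (FF (M - 1)) * prefix_ratio \<mu> s M + real (FF (M - s))"
    using zeck_val_restr_pad_eq[of \<mu> s M] zeck_frac_decomp[of m] assms(3) c(1)
    by (simp add: M_def)
  then show ?thesis using FF_pos[of "M - 1"] by (simp add: M_def field_simps)
qed

lemma LB_le_imp_zeck_frac_le:
  assumes "zeck_seq \<mu>" "\<mu> 0 = 1" "1 \<le> s"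
    and "(\<Sum>i<s. real (\<mu> (Suc i)) * omega ^ i) + omega ^ (s - 1) < x"
  shows "\<exists>M0. \<forall>m\<ge>1. M0 \<le> length (zeck m) \<longrightarrow>
    (\<exists>c. LB (Suc s) m = Some c \<and> lex_le c (restr \<mu> (Suc s))) \<longrightarrow> zeck_frac m \<le> x"
proof -
  have "(\<lambda>M. prefix_ratio \<mu> s M + real (FF (M - s)) / real (FF (M - 1)))
      \<longlonglongrightarrow> (\<Sum>i<s. real (\<mu> (Suc i)) * omega ^ i) + omega ^ (s - 1)"
    using assms(3) by (intro tendsto_add prefix_ratio_tendsto FF_diff_ratio_tendsto)
  from order_tendstoD(2)[OF this assms(4)] obtain M0
    where M0: "\<forall>M\<ge>M0. prefix_ratio \<mu> s M + real (FF (M - s)) / real (FF (M - 1)) < x"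
    by (auto simp: eventually_sequentially)
  show ?thesis
  proof (intro exI allI impI)
    fix m assume m: "1 \<le> m" "M0 \<le> length (zeck m)"
      and "\<exists>c. LB (Suc s) m = Some c \<and> lex_le c (restr \<mu> (Suc s))"
    then obtain c where "LB (Suc s) m = Some c" "lex_le c (restr \<mu> (Suc s))" by blast
    from zeck_frac_less_prefix_ratio[OF m(1) assms(1,2) this] M0 m(2)
    show "zeck_frac m \<le> x" by fastforce
  qed
qed

lemma zeck_frac_le_imp_LB_le:
  assumes "zeck_seq \<mu>" "\<mu> 0 = 1" "x < (\<Sum>i<s. real (\<mu> (Suc i)) * omega ^ i)"
  shows "\<exists>M0. \<forall>m\<ge>1. M0 \<le> length (zeck m) \<longrightarrow> zeck_frac m \<le> x \<longrightarrow>
    (\<exists>c. LB (Suc s) m = Some c \<and> lex_le c (restr \<mu> (Suc s)))"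
proof -
  from order_tendstoD(1)[OF prefix_ratio_tendsto assms(3)] obtain M0
    where M0: "\<forall>M\<ge>M0. x < prefix_ratio \<mu> s M"
    by (auto simp: eventually_sequentially)
  show ?thesis
  proof (intro exI[of _ "max M0 (Suc s)"] allI impI)
    fix m assume m: "1 \<le> m" "max M0 (Suc s) \<le> length (zeck m)" "zeck_frac m \<le> x"
    have LB: "LB (Suc s) m = Some (take (Suc s) (zeck m))" using m(2) by (simp add: LB_eq_Some_iff)
    have "\<not> prefix_ratio \<mu> s (length (zeck m)) < zeck_frac m" using M0 m by fastforce
    then have "lex_le (take (Suc s) (zeck m)) (restr \<mu> (Suc s))"
      using prefix_ratio_less_zeck_frac[OF m(1) assms(1,2) LB] by blast
    then show "\<exists>c. LB (Suc s) m = Some c \<and> lex_le c (restr \<mu> (Suc s))" using LB by blast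
  qed
qed

section \<open>The continuation\<close>

definition unit_homeo :: "(real \<Rightarrow> real) \<Rightarrow> bool" where
  "unit_homeo g \<longleftrightarrow> continuous_on {0..1} g \<and> strict_mono_on {0..1} g \<and> g 0 = 0 \<and> g 1 = 1"

lemma unit_homeo_image:
  assumes "unit_homeo g"
  shows "g ` {0..1} = {0..1}"
proof
  show "g ` {0..1} \<subseteq> {0..1}"
    using assms strict_mono_on_leD[of "{0..1}" g 0] strict_mono_on_leD[of "{0..1}" g _ 1]
    by (fastforce simp: unit_homeo_def)
  show "{0..1} \<subseteq> g ` {0..1}"
    using assms IVT'[of g 0 _ 1] by (fastforce simp: unit_homeo_def)
qed

lemma unit_homeo_bij_betw: "unit_homeo g \<Longrightarrow> bij_betw g {0..1} {0..1}"
  by (simp add: bij_betw_def unit_homeo_image strict_mono_on_imp_inj_on unit_homeo_def)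

lemma unit_homeo_less_1: "unit_homeo g \<Longrightarrow> 0 \<le> t \<Longrightarrow> t < 1 \<Longrightarrow> g t < 1"
  using strict_mono_onD[of "{0..1}" g t 1] by (simp add: unit_homeo_def)

lemma unit_homeo_nonneg: "unit_homeo g \<Longrightarrow> 0 \<le> t \<Longrightarrow> t \<le> 1 \<Longrightarrow> 0 \<le> g t"
  using unit_homeo_image[of g] by auto

lemma unit_homeo_the_inv_into:
  assumes g: "unit_homeo g"
  shows "unit_homeo (the_inv_into {0..1} g)"
proof -
  have inj: "inj_on g {0..1}" using g by (simp add: unit_homeo_def strict_mono_on_imp_inj_on)
  have "continuous_on (g ` {0..1}) (the_inv_into {0..1} g)"
    using g inj by (intro continuous_on_inv_into) (auto simp: unit_homeo_def)
  moreover have "strict_mono_on {0..1} (the_inv_into {0..1} g)"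
  proof (rule strict_mono_onI)
    fix p q :: real assume pq: "p \<in> {0..1}" "q \<in> {0..1}" "p < q"
    then have "g (the_inv_into {0..1} g p) < g (the_inv_into {0..1} g q)"
      using f_the_inv_into_f_bij_betw[OF unit_homeo_bij_betw[OF g]] by simp
    then show "the_inv_into {0..1} g p < the_inv_into {0..1} g q"
      using g pq bij_betwE[OF bij_betw_the_inv_into[OF unit_homeo_bij_betw[OF g]]]
      by (auto simp: unit_homeo_def strict_mono_on_less)
  qed
  moreover have "the_inv_into {0..1} g 0 = 0" "the_inv_into {0..1} g 1 = 1"
    using g inj by (auto simp: unit_homeo_def intro: the_inv_into_f_eq)
  ultimately show ?thesis using unit_homeo_image[OF g] by (simp add: unit_homeo_def)
qed

lemma continuous_on_atLeast_1_piecewise: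
  fixes f :: "real \<Rightarrow> real"
  assumes "\<And>m. 1 \<le> m \<Longrightarrow> continuous_on {real m..real m + 1} f"
  shows "continuous_on {1..} f"
proof (unfold continuous_on_eq_continuous_within, intro ballI)
  fix t :: real assume t: "t \<in> {1..}"
  define N where "N = nat \<lceil>t\<rceil> + 1"
  have "{1..real N} \<subseteq> (\<Union>m\<in>{1..<N}. {real m..real m + 1})"
  proof
    fix s assume s: "s \<in> {1..real N}"
    show "s \<in> (\<Union>m\<in>{1..<N}. {real m..real m + 1})"
    proof (cases "s < real N")
      case True
      then show ?thesis using s by (intro UN_I[of "nat \<lfloor>s\<rfloor>"]) (auto, linarith+)
    next
      case False
      then show ?thesis using s t by (intro UN_I[of "N - 1"]) (auto simp: N_def, linarith)
    qed
  qed
  moreover have "continuous_on (\<Union>m\<in>{1..<N}. {real m..real m + 1}) f"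
    by (rule continuous_on_closed_Union) (auto intro: assms)
  ultimately have "continuous_on {1..real N} f"
    by (rule continuous_on_subset[rotated])
  moreover have "t \<in> {1..real N}" using t unfolding N_def by simp linarith
  ultimately have "continuous (at t within {1..real N}) f"
    by (simp add: continuous_on_eq_continuous_within)
  moreover have "at t within {1..} = at t within {1..real N}"
    by (rule at_within_nhd[of _ "{..<real N}"]) (auto simp: N_def, linarith)
  ultimately show "continuous (at t within {1..}) f" by simp
qed

definition fib_interp :: "(real \<Rightarrow> real) \<Rightarrow> real \<Rightarrow> real" where
  "fib_interp h t = real (FF (nat \<lfloor>t\<rfloor>)) + real (FF (nat \<lfloor>t\<rfloor> - 1)) * h (frac t)"

lemma fib_interp_eq:
  assumes "unit_homeo h" "1 \<le> m" "real m \<le> t" "t \<le> real m + 1"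
  shows "fib_interp h t = real (FF m) + real (FF (m - 1)) * h (t - real m)"
proof (cases "t < real m + 1")
  case True
  then have "\<lfloor>t\<rfloor> = int m" using assms(3) by (simp add: floor_eq_iff)
  then show ?thesis using assms(2,3) by (simp add: fib_interp_def frac_def)
next
  case False
  then have "t = real (Suc m)" using assms(4) by simp
  then have "nat \<lfloor>t\<rfloor> = Suc m" "h (frac t) = 0" "h (t - real m) = 1"
    using assms(1) by (simp_all add: frac_def unit_homeo_def)
  then show ?thesis using FF_Suc[OF assms(2)] by (simp add: fib_interp_def)
qed

lemma strict_mono_on_fib_interp:
  assumes h: "unit_homeo h"
  shows "strict_mono_on {1..} (fib_interp h)"
proof (rule strict_mono_onI)
  fix s t :: real assume st: "s \<in> {1..}" "t \<in> {1..}" "s < t"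
  have frac01: "0 \<le> frac x" "frac x < 1" for x :: real by (simp_all add: frac_lt_1)
  have pos: "0 < real (FF k)" for k using FF_pos by simp
  show "fib_interp h s < fib_interp h t"
  proof (cases "\<lfloor>s\<rfloor> = \<lfloor>t\<rfloor>")
    case True
    then have "frac s < frac t" using st(3) by (simp add: frac_def)
    then have "h (frac s) < h (frac t)"
      using h frac01[of s] frac01[of t] strict_mono_onD[of "{0..1}" h "frac s" "frac t"]
      by (simp add: unit_homeo_def)
    then show ?thesis using st True pos by (simp add: fib_interp_def)
  next
    case False
    then have "\<lfloor>s\<rfloor> < \<lfloor>t\<rfloor>" using floor_mono[of s t] st(3) by simp
    then have "Suc (nat \<lfloor>s\<rfloor>) \<le> nat \<lfloor>t\<rfloor>" using st(1,2) by (simp add: Suc_le_eq nat_less_eq_zless)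
    have "fib_interp h s < real (FF (nat \<lfloor>s\<rfloor>)) + real (FF (nat \<lfloor>s\<rfloor> - 1))"
      using st unit_homeo_less_1[OF h frac01] pos by (simp add: fib_interp_def)
    also have "\<dots> = real (FF (Suc (nat \<lfloor>s\<rfloor>)))"
      using st(1) FF_Suc[of "nat \<lfloor>s\<rfloor>"] by (simp add: le_nat_iff)
    also have "\<dots> \<le> real (FF (nat \<lfloor>t\<rfloor>))" using FF_mono[OF \<open>Suc (nat \<lfloor>s\<rfloor>) \<le> nat \<lfloor>t\<rfloor>\<close>] by simp
    also have "\<dots> \<le> fib_interp h t"
      using st unit_homeo_nonneg[OF h frac01(1) less_imp_le[OF frac01(2)]]
      by (simp add: fib_interp_def)
    finally show ?thesis .
  qed
qed

lemma continuous_on_fib_interp: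
  assumes "unit_homeo h"
  shows "continuous_on {1..} (fib_interp h)"
proof (rule continuous_on_atLeast_1_piecewise)
  fix m :: nat assume m: "1 \<le> m"
  have "continuous_on {real m..real m + 1} (\<lambda>t. h (t - real m))"
    by (rule continuous_on_compose2[of "{0..1}" h])
      (use assms in \<open>auto simp: unit_homeo_def intro!: continuous_intros\<close>)
  then have "continuous_on {real m..real m + 1}
      (\<lambda>t. real (FF m) + real (FF (m - 1)) * h (t - real m))"
    by (intro continuous_intros)
  then show "continuous_on {real m..real m + 1} (fib_interp h)"
    by (rule continuous_on_eq) (simp add: fib_interp_eq[OF assms m])
qed

lemma unif_cont_fib_interp:
  assumes h: "unit_homeo h"
  shows "unif_cont (fib_interp h) h"
proof -
  define q where "q = (\<lambda>n p. (fib_interp h (real n + p) - fib_interp h (real n)) /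
      (fib_interp h (real n + 1) - fib_interp h (real n)))"
  have "\<forall>p\<in>{0..1}. q n p = h p" if "1 \<le> n" for n
    using that FF_pos[of "n - 1"] h by (simp add: q_def fib_interp_eq unit_homeo_def)
  then have "eventually (\<lambda>n. \<forall>p\<in>{0..1}. q n p = h p) sequentially"
    unfolding eventually_sequentially by blast
  from uniform_limit_cong[OF this, of h h]
    uniform_limit_const[where S = "{0..1}" and c = h and f = sequentially]
  have "uniform_limit {0..1} q h sequentially" by simp
  note this[unfolded q_def]
  moreover have "fib_interp h (real n) = real (FF n)" if "1 \<le> n" for n
    using fib_interp_eq[OF h that, of "real n"] h by (simp add: unit_homeo_def)
  ultimately show ?thesis
    using strict_mono_on_fib_interp[OF h] continuous_on_fib_interp[OF h] h
    by (simp add: unif_cont_def unit_homeo_def)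
qed

lemma the_inv_into_fib_interp:
  assumes "unit_homeo h" "1 \<le> m" "0 \<le> q" "q \<le> 1"
  shows "the_inv_into {1..} (fib_interp h) (real (FF m) + real (FF (m - 1)) * h q) = real m + q"
  using fib_interp_eq[OF assms(1,2), of "real m + q"] assms
  by (intro the_inv_into_f_eq strict_mono_on_imp_inj_on strict_mono_on_fib_interp) auto

lemma frac_the_inv_into_fib_interp:
  assumes g: "unit_homeo g" and m: "1 \<le> m"
  shows "frac (the_inv_into {1..} (fib_interp (the_inv_into {0..1} g)) (real m)) = g (zeck_frac m)"
proof -
  define h where "h = the_inv_into {0..1} g"
  have r: "0 \<le> zeck_frac m" "zeck_frac m < 1" using zeck_frac_bounds[OF m] by auto
  have gr: "0 \<le> g (zeck_frac m)" "g (zeck_frac m) < 1"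
    using unit_homeo_nonneg[OF g] unit_homeo_less_1[OF g] r by auto
  have "h (g (zeck_frac m)) = zeck_frac m"
    using g r by (simp add: h_def unit_homeo_def strict_mono_on_imp_inj_on the_inv_into_f_f)
  then have "real m =
      real (FF (length (zeck m))) + real (FF (length (zeck m) - 1)) * h (g (zeck_frac m))"
    using zeck_frac_decomp[of m] by simp
  then have "the_inv_into {1..} (fib_interp h) (real m) = real (length (zeck m)) + g (zeck_frac m)"
    using the_inv_into_fib_interp[OF unit_homeo_the_inv_into[OF g] length_zeck_pos[OF m]] gr
    by (simp add: h_def)
  then show ?thesis using gr by (simp add: h_def frac_unique_iff)
qed

section \<open>Counting leading blocks\<close>

definition count_density :: "(nat \<Rightarrow> bool) \<Rightarrow> nat \<Rightarrow> real" where
  "count_density P n = real (card {k \<in> {1..n}. P k}) / real n"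

lemma count_density_le_shift:
  assumes "\<forall>k\<ge>k0. P k \<longrightarrow> Q k"
  shows "count_density P n \<le> count_density Q n + real k0 / real n"
proof -
  have "{k \<in> {1..n}. P k} \<subseteq> {k \<in> {1..n}. Q k} \<union> {..<k0}" using assms by auto
  then have "card {k \<in> {1..n}. P k} \<le> card ({k \<in> {1..n}. Q k} \<union> {..<k0})" by (intro card_mono) auto
  also have "\<dots> \<le> card {k \<in> {1..n}. Q k} + k0" using card_Un_le[of _ "{..<k0}"] by simp
  finally show ?thesis
    by (simp add: count_density_def add_divide_distrib[symmetric] divide_right_mono)
qed

lemma eventually_count_density_gt:
  assumes "\<forall>k\<ge>k0. P k \<longrightarrow> Q k" "count_density P \<longlonglongrightarrow> L" "a < L"
  shows "eventually (\<lambda>n. a < count_density Q n) sequentially"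
proof -
  have "(\<lambda>n. count_density P n - real k0 / real n) \<longlonglongrightarrow> L - 0"
    by (intro tendsto_diff assms(2) lim_const_over_n)
  then have "eventually (\<lambda>n. a < count_density P n - real k0 / real n) sequentially"
    using assms(3) by (intro order_tendstoD(1)) simp
  then show ?thesis
    by (rule eventually_mono) (use count_density_le_shift[OF assms(1)] in \<open>smt (verit)\<close>)
qed

lemma eventually_count_density_less:
  assumes "\<forall>k\<ge>k0. Q k \<longrightarrow> P k" "count_density P \<longlonglongrightarrow> L" "L < b"
  shows "eventually (\<lambda>n. count_density Q n < b) sequentially"
proof -
  have "(\<lambda>n. count_density P n + real k0 / real n) \<longlonglongrightarrow> L + 0"
    by (intro tendsto_add assms(2) lim_const_over_n)
  then have "eventually (\<lambda>n. count_density P n + real k0 / real n < b) sequentially"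
    using assms(3) by (intro order_tendstoD(2)) simp
  then show ?thesis
    by (rule eventually_mono) (use count_density_le_shift[OF assms(1)] in \<open>smt (verit)\<close>)
qed

lemma le_length_zeck: "FF M \<le> m \<Longrightarrow> M \<le> length (zeck m)"
  using length_zeck_bounds[of m] FF_pos[of M] FF_mono[of "Suc (length (zeck m))" M] by fastforce

lemma exists_length_zeck_ge:
  assumes "filterlim K at_top sequentially"
  shows "\<exists>k0\<ge>1. \<forall>k\<ge>k0. M \<le> length (zeck (K k))"
proof -
  have "eventually (\<lambda>k. FF M \<le> K k) sequentially"
    using assms by (simp add: filterlim_at_top)
  then obtain k0 where "\<forall>k\<ge>k0. FF M \<le> K k" by (auto simp: eventually_sequentially)
  then show ?thesis using le_length_zeck by (intro exI[of _ "max 1 k0"]) auto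
qed

lemma unit_homeo_fKstar: "cont_LB_dist K \<Longrightarrow> unit_homeo (fKstar K)"
  by (simp add: cont_LB_dist_def unit_homeo_def fKstar_def)

lemma LB_cdf_limits:
  assumes "cont_LB_dist K" "\<mu> \<in> Fstar" "\<mu> 0 = 1" "0 < phi * (dotF \<mu> - 1)" "phi * (dotF \<mu> - 1) < 1"
  shows "LB_cdf K \<mu> s \<longlonglongrightarrow> lim (LB_cdf K \<mu> s)"
    and "(\<lambda>s. lim (LB_cdf K \<mu> s)) \<longlonglongrightarrow> fKstar K (phi * (dotF \<mu> - 1))"
  using assms fKstar_Fstar_point[of \<mu> K]
  by (auto simp: cont_LB_dist_def convergent_LIMSEQ_iff)

lemma LB_cdf_eq_count_density:
  "LB_cdf K \<mu> s = count_density (\<lambda>k. \<exists>c. LB s (K k) = Some c \<and> lex_le c (restr \<mu> s))"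
  by (simp add: fun_eq_iff LB_cdf_def count_density_def)

lemma count_density_cong: "(\<And>k. 1 \<le> k \<Longrightarrow> P k \<longleftrightarrow> Q k) \<Longrightarrow> count_density P = count_density Q"
  unfolding count_density_def fun_eq_iff
  by (metis (mono_tags, lifting) Collect_cong atLeastAtMost_iff)

lemma equidistributed_iff_count_density:
  "equidistributed x \<longleftrightarrow> (\<forall>\<beta>\<in>{0..1}. count_density (\<lambda>k. frac (x k) \<le> \<beta>) \<longlonglongrightarrow> \<beta>)"
  by (simp only: equidistributed_def count_density_def[abs_def])

context
  fixes K :: "nat \<Rightarrow> nat"
  assumes K_pos: "\<forall>k\<ge>1. K k > 0"
    and K_tendsto: "filterlim K at_top sequentially"
    and K_cont: "cont_LB_dist K"
begin

lemma eventually_count_density_gt_Fstar_point: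
  assumes \<mu>: "\<mu> \<in> Fstar" "\<mu> 0 = 1"
    and y: "0 < phi * (dotF \<mu> - 1)" "phi * (dotF \<mu> - 1) < x" "x \<le> 1"
    and a: "a < fKstar K (phi * (dotF \<mu> - 1))"
  shows "eventually (\<lambda>n. a < count_density (\<lambda>k. zeck_frac (K k) \<le> x) n) sequentially"
proof -
  have "phi * (dotF \<mu> - 1) < 1" using y(2,3) by simp
  note lim = LB_cdf_limits[OF K_cont \<mu> y(1) this]
  have "(\<lambda>s. (\<Sum>i<s. real (\<mu> (Suc i)) * omega ^ i) + omega ^ (s - 1)) \<longlonglongrightarrow> phi * (dotF \<mu> - 1) + 0"
    using Fstar_imp_zeck_seq[OF \<mu>(1)] \<mu>(2)
    by (intro tendsto_add partial_dotF_tail_tendsto omega_power_pred_tendsto)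
  from order_tendstoD(2)[OF this] y(2)
  have "eventually (\<lambda>s. (\<Sum>i<s. real (\<mu> (Suc i)) * omega ^ i) + omega ^ (s - 1) < x) sequentially"
    by simp
  with eventually_ge_at_top[of 1] order_tendstoD(1)[OF LIMSEQ_Suc[OF lim(2)] a]
  have "eventually (\<lambda>s. 1 \<le> s \<and> a < lim (LB_cdf K \<mu> (Suc s)) \<and>
      (\<Sum>i<s. real (\<mu> (Suc i)) * omega ^ i) + omega ^ (s - 1) < x) sequentially"
    by (auto intro: eventually_conj)
  then obtain s where s: "1 \<le> s" "a < lim (LB_cdf K \<mu> (Suc s))"
    "(\<Sum>i<s. real (\<mu> (Suc i)) * omega ^ i) + omega ^ (s - 1) < x"
    by (auto simp: eventually_sequentially)
  obtain M0 where M0: "\<forall>m\<ge>1. M0 \<le> length (zeck m) \<longrightarrow>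
      (\<exists>c. LB (Suc s) m = Some c \<and> lex_le c (restr \<mu> (Suc s))) \<longrightarrow> zeck_frac m \<le> x"
    using LB_le_imp_zeck_frac_le[OF Fstar_imp_zeck_seq[OF \<mu>(1)] \<mu>(2) s(1,3)] by blast
  obtain k0 where k0: "1 \<le> k0" "\<forall>k\<ge>k0. M0 \<le> length (zeck (K k))"
    using exists_length_zeck_ge[OF K_tendsto] by blast
  have "\<forall>k\<ge>k0. (\<exists>c. LB (Suc s) (K k) = Some c \<and> lex_le c (restr \<mu> (Suc s))) \<longrightarrow> zeck_frac (K k) \<le> x"
    using M0 k0 K_pos by (auto simp: Suc_le_eq)
  from eventually_count_density_gt[OF this lim(1)[of "Suc s", unfolded LB_cdf_eq_count_density]
      s(2)[unfolded LB_cdf_eq_count_density]]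
  show ?thesis .
qed

lemma eventually_count_density_less_Fstar_point:
  assumes \<mu>: "\<mu> \<in> Fstar" "\<mu> 0 = 1"
    and z: "0 \<le> x" "x < phi * (dotF \<mu> - 1)" "phi * (dotF \<mu> - 1) < 1"
    and b: "fKstar K (phi * (dotF \<mu> - 1)) < b"
  shows "eventually (\<lambda>n. count_density (\<lambda>k. zeck_frac (K k) \<le> x) n < b) sequentially"
proof -
  have "0 < phi * (dotF \<mu> - 1)" using z(1,2) by simp
  note lim = LB_cdf_limits[OF K_cont \<mu> this z(3)]
  have "eventually (\<lambda>s. x < (\<Sum>i<s. real (\<mu> (Suc i)) * omega ^ i)) sequentially"
    using partial_dotF_tail_tendsto[OF Fstar_imp_zeck_seq[OF \<mu>(1)] \<mu>(2)] z(2)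
    by (rule order_tendstoD(1))
  with order_tendstoD(2)[OF LIMSEQ_Suc[OF lim(2)] b]
  have "eventually (\<lambda>s. lim (LB_cdf K \<mu> (Suc s)) < b \<and> x < (\<Sum>i<s. real (\<mu> (Suc i)) * omega ^ i))
      sequentially"
    by (rule eventually_conj)
  then obtain s where s: "lim (LB_cdf K \<mu> (Suc s)) < b" "x < (\<Sum>i<s. real (\<mu> (Suc i)) * omega ^ i)"
    by (auto simp: eventually_sequentially)
  obtain M0 where M0: "\<forall>m\<ge>1. M0 \<le> length (zeck m) \<longrightarrow> zeck_frac m \<le> x \<longrightarrow>
      (\<exists>c. LB (Suc s) m = Some c \<and> lex_le c (restr \<mu> (Suc s)))"
    using zeck_frac_le_imp_LB_le[OF Fstar_imp_zeck_seq[OF \<mu>(1)] \<mu>(2) s(2)] by blast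
  obtain k0 where k0: "1 \<le> k0" "\<forall>k\<ge>k0. M0 \<le> length (zeck (K k))"
    using exists_length_zeck_ge[OF K_tendsto] by blast
  have "\<forall>k\<ge>k0. zeck_frac (K k) \<le> x \<longrightarrow> (\<exists>c. LB (Suc s) (K k) = Some c \<and> lex_le c (restr \<mu> (Suc s)))"
    using M0 k0 K_pos by (auto simp: Suc_le_eq)
  from eventually_count_density_less[OF this lim(1)[of "Suc s", unfolded LB_cdf_eq_count_density]
      s(1)[unfolded LB_cdf_eq_count_density]]
  show ?thesis .
qed

lemma eventually_count_density_zeck_frac_gt:
  assumes "0 \<le> x" "x \<le> 1" "a < fKstar K x"
  shows "eventually (\<lambda>n. a < count_density (\<lambda>k. zeck_frac (K k) \<le> x) n) sequentially"
proof (cases "x = 0")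
  case True
  then have "a < 0" using assms(3) by (simp add: fKstar_def)
  then show ?thesis by (intro always_eventually) (simp add: count_density_def less_le_trans)
next
  case False
  obtain d where d: "0 < d"
    "\<forall>t\<in>{0..1}. dist t x < d \<longrightarrow> dist (fKstar K t) (fKstar K x) < fKstar K x - a"
    using unit_homeo_fKstar[OF K_cont] assms unfolding unit_homeo_def continuous_on_iff
    by (metis atLeastAtMost_iff diff_gt_0_iff_gt)
  obtain \<mu> where \<mu>: "\<mu> \<in> Fstar" "\<mu> 0 = 1"
    "max 0 (x - d) < phi * (dotF \<mu> - 1)" "phi * (dotF \<mu> - 1) < x"
    using Fstar_points_dense[of "max 0 (x - d)" x] False assms d(1) by auto
  then have "a < fKstar K (phi * (dotF \<mu> - 1))"
    using d(2)[rule_format, of "phi * (dotF \<mu> - 1)"] assms by (auto simp: dist_real_def)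
  then show ?thesis using eventually_count_density_gt_Fstar_point \<mu> assms by auto
qed

lemma eventually_count_density_zeck_frac_less:
  assumes "0 \<le> x" "x \<le> 1" "fKstar K x < b"
  shows "eventually (\<lambda>n. count_density (\<lambda>k. zeck_frac (K k) \<le> x) n < b) sequentially"
proof (cases "x = 1")
  case True
  have "count_density (\<lambda>k. zeck_frac (K k) \<le> x) n = 1" if "1 \<le> n" for n
  proof -
    have "{k \<in> {1..n}. zeck_frac (K k) \<le> x} = {1..n}"
      using True K_pos zeck_frac_bounds by (auto simp: less_imp_le Suc_le_eq)
    then show ?thesis using that by (simp add: count_density_def)
  qed
  moreover have "1 < b" using assms(3) True by (simp add: fKstar_def)
  ultimately show ?thesis unfolding eventually_sequentially by (intro exI[of _ 1]) auto
next
  case False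
  obtain d where d: "0 < d"
    "\<forall>t\<in>{0..1}. dist t x < d \<longrightarrow> dist (fKstar K t) (fKstar K x) < b - fKstar K x"
    using unit_homeo_fKstar[OF K_cont] assms unfolding unit_homeo_def continuous_on_iff
    by (metis atLeastAtMost_iff diff_gt_0_iff_gt)
  obtain \<mu> where \<mu>: "\<mu> \<in> Fstar" "\<mu> 0 = 1"
    "x < phi * (dotF \<mu> - 1)" "phi * (dotF \<mu> - 1) < min 1 (x + d)"
    using Fstar_points_dense[of x "min 1 (x + d)"] False assms d(1) by auto
  then have "fKstar K (phi * (dotF \<mu> - 1)) < b"
    using d(2)[rule_format, of "phi * (dotF \<mu> - 1)"] assms by (auto simp: dist_real_def)
  then show ?thesis using eventually_count_density_less_Fstar_point \<mu> assms by auto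
qed

lemma count_density_zeck_frac_tendsto:
  "0 \<le> x \<Longrightarrow> x \<le> 1 \<Longrightarrow> count_density (\<lambda>k. zeck_frac (K k) \<le> x) \<longlonglongrightarrow> fKstar K x"
  by (rule order_tendstoI)
    (simp_all add: eventually_count_density_zeck_frac_gt eventually_count_density_zeck_frac_less)

lemma equidistributed_fib_interp:
  defines "h \<equiv> the_inv_into {0..1} (fKstar K)"
  shows "equidistributed (\<lambda>n. the_inv_into {1..} (fib_interp h) (real (K n)))"
  unfolding equidistributed_iff_count_density
proof
  fix \<beta> :: real assume \<beta>: "\<beta> \<in> {0..1}"
  have g: "unit_homeo (fKstar K)" using K_cont by (rule unit_homeo_fKstar)
  have h\<beta>: "h \<beta> \<in> {0..1}" "fKstar K (h \<beta>) = \<beta>"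
    using \<beta> bij_betwE[OF bij_betw_the_inv_into[OF unit_homeo_bij_betw[OF g]]]
      f_the_inv_into_f_bij_betw[OF unit_homeo_bij_betw[OF g]]
    by (auto simp: h_def)
  have "frac (the_inv_into {1..} (fib_interp h) (real (K k))) \<le> \<beta> \<longleftrightarrow> zeck_frac (K k) \<le> h \<beta>"
    if "1 \<le> k" for k
  proof -
    have "1 \<le> K k" using K_pos that by (simp add: Suc_le_eq)
    then have "frac (the_inv_into {1..} (fib_interp h) (real (K k))) = fKstar K (zeck_frac (K k))"
      "zeck_frac (K k) \<in> {0..1}"
      using frac_the_inv_into_fib_interp[OF g] zeck_frac_bounds[of "K k"] by (auto simp: h_def)
    then show ?thesis
      using strict_mono_on_less_eq[of "{0..1}" "fKstar K" "zeck_frac (K k)" "h \<beta>"] g h\<beta>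
      by (simp add: unit_homeo_def)
  qed
  then have "count_density (\<lambda>k. frac (the_inv_into {1..} (fib_interp h) (real (K k))) \<le> \<beta>) =
      count_density (\<lambda>k. zeck_frac (K k) \<le> h \<beta>)"
    by (rule count_density_cong)
  then show "count_density (\<lambda>k. frac (the_inv_into {1..} (fib_interp h) (real (K k))) \<le> \<beta>) \<longlonglongrightarrow> \<beta>"
    using count_density_zeck_frac_tendsto[of "h \<beta>"] h\<beta> by simp
qed

end

theorem theorem5p18:
  fixes K :: "nat \<Rightarrow> nat"
  assumes "\<forall>k\<ge>1. K k > 0"
    and "filterlim K at_top sequentially"
    and "cont_LB_dist K"
  shows "\<exists>f finf. unif_cont f finf \<and> bij_betw finf {0..1} {0..1} \<and>
           (\<forall>p\<in>{0..1}. fKstar K (finf p) = p) \<and>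
           equidistributed (\<lambda>n. the_inv_into {1..} f (real (K n)))"
proof -
  define h where "h = the_inv_into {0..1} (fKstar K)"
  have g: "unit_homeo (fKstar K)" using assms(3) by (rule unit_homeo_fKstar)
  then have h: "unit_homeo h" unfolding h_def by (rule unit_homeo_the_inv_into)
  show ?thesis
  proof (intro exI conjI)
    show "unif_cont (fib_interp h) h" using h by (rule unif_cont_fib_interp)
    show "bij_betw h {0..1} {0..1}" using h by (rule unit_homeo_bij_betw)
    show "\<forall>p\<in>{0..1}. fKstar K (h p) = p"
      using f_the_inv_into_f_bij_betw[OF unit_homeo_bij_betw[OF g]] by (simp add: h_def)
    show "equidistributed (\<lambda>n. the_inv_into {1..} (fib_interp h) (real (K n)))"
      using equidistributed_fib_interp[OF assms] by (simp add: h_def)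
  qed
qed

end
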